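(* Let $K$ be a valued field and $d\ge1$. Then the dual VC-dimension of $\operatorname{Conv}_{K^d}$ is exactly $d$: there are $d$ convex sets $S_1,\dots,S_d\subseteq K^d$ such that all $2^d$ sets $\bigcap_{i\in I}S_i\cap\bigcap_{i\notin I}(K^d\setminus S_i)$, $I\subseteq\{1,\dots,d\}$, are nonempty, but for no $d+1$ convex sets $S_1,\dots,S_{d+1}$ are all $2^{d+1}$ such sets nonempty.
   Context: $K$ is a field with valuation $\nu$ and valuation ring $\mathcal{O}=\{x:\nu(x)\ge0\}$. A set $X\subseteq K^d$ is convex if it is closed under combinations $\sum_{i=1}^n\alpha_ix_i$ with $x_i\in X$, $\alpha_i\in\mathcal{O}$, $\sum\alpha_i=1$; $\operatorname{Conv}_{K^d}$ is the family of all convex subsets of $K^d$. The dual VC-dimension of a family $\mathcal{F}\subseteq\mathcal{P}(X)$ is the largest $k$ such that there exist $S_1,\dots,S_k\in\mathcal{F}$ with $\bigcap_{i\in I}S_i\cap\bigcap_{i\in[k]\setminus I}(X\setminus S_i)\neq\emptyset$ for every $I\subseteq[k]$ (or $\infty$). *)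

theory Defs
  imports "HOL-Analysis.Analysis" "HOL-Library.Extended_Nat"
begin

text \<open>A (Krull) valuation on a field 'a with values in a totally ordered abelian
  group 'g.  The value at 0 (conventionally infinity) is irrelevant and ignored.\<close>
definition valuation :: "('a::field \<Rightarrow> 'g::linordered_ab_group_add) \<Rightarrow> bool" where
  "valuation v \<longleftrightarrow>
     (\<forall>x y. x \<noteq> 0 \<longrightarrow> y \<noteq> 0 \<longrightarrow> v (x * y) = v x + v y) \<and>
     (\<forall>x y. x \<noteq> 0 \<longrightarrow> y \<noteq> 0 \<longrightarrow> x + y \<noteq> 0 \<longrightarrow> min (v x) (v y) \<le> v (x + y))"

text \<open>Valuation ring O = {x. v(x) \<ge> 0} (0 included, since v(0) = infinity).\<close>
definition val_ring :: "('a::field \<Rightarrow> 'g::linordered_ab_group_add) \<Rightarrow> 'a set" where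
  "val_ring v = {x. x = 0 \<or> 0 \<le> v x}"

definition val_convex :: "('a::field \<Rightarrow> 'g::linordered_ab_group_add) \<Rightarrow> ('a ^ 'n) set \<Rightarrow> bool" where
  "val_convex v X \<longleftrightarrow>
     (\<forall>(n::nat) (x::nat \<Rightarrow> 'a ^ 'n) (\<alpha>::nat \<Rightarrow> 'a).
        (\<forall>i<n. x i \<in> X \<and> \<alpha> i \<in> val_ring v) \<and> (\<Sum>i<n. \<alpha> i) = 1
        \<longrightarrow> (\<Sum>i<n. \<alpha> i *s x i) \<in> X)"

definition Conv :: "('a::field \<Rightarrow> 'g::linordered_ab_group_add) \<Rightarrow> ('a ^ 'n) set set" where
  "Conv v = {X. val_convex v X}"

definition dual_shatters :: "'b set \<Rightarrow> 'b set set \<Rightarrow> nat \<Rightarrow> bool" where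
  "dual_shatters X F k \<longleftrightarrow>
     (\<exists>S::nat \<Rightarrow> 'b set. (\<forall>i<k. S i \<in> F) \<and>
        (\<forall>I \<subseteq> {..<k}. X \<inter> (\<Inter>i\<in>I. S i) \<inter> (\<Inter>i\<in>{..<k} - I. X - S i) \<noteq> {}))"

definition dual_vc_dim :: "'b set \<Rightarrow> 'b set set \<Rightarrow> enat" where
  "dual_vc_dim X F =
     (if \<exists>N. \<forall>k. dual_shatters X F k \<longrightarrow> k \<le> N
      then enat (GREATEST k. dual_shatters X F k) else \<infinity>)"

end

theory Submission
  imports Defs
begin

text \<open>
  The d coordinate hyperplanes x_j = 0 are convex and realise all 2^d atoms.
  Conversely, suppose d+1 convex sets S_i are dually shattered. Pick q in all of them and,
  for each i, a point p_i lying in every S_j except S_i. The d+1 vectors p_i - q are linearly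
  dependent; dividing a nontrivial relation by a coefficient c_j of minimal valuation writes
  p_j - q as a combination of the other p_i - q with coefficients in the valuation ring.
  That exhibits p_j as a convex combination of q and the p_i, i \<noteq> j, all of which lie in S_j,
  so p_j \<in> S_j, a contradiction.
\<close>

lemma valuation_mult:
  assumes "valuation v" "x \<noteq> 0" "y \<noteq> 0"
  shows "v (x * y) = v x + v y"
  using assms unfolding valuation_def by blast

lemma valuation_one:
  assumes "valuation v"
  shows "v 1 = 0"
  using valuation_mult[OF assms, of 1 1] by simp

lemma valuation_minus_one:
  assumes "valuation v"
  shows "v (-1) = 0"
proof -
  have "v (-1) + v (-1) = 0"
    using valuation_mult[OF assms, of "-1" "-1"] valuation_one[OF assms] by simp
  then show ?thesis
    by (metis add_neg_neg add_pos_pos less_irrefl linorder_neqE)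
qed

lemma valuation_uminus:
  assumes "valuation v" "x \<noteq> 0"
  shows "v (-x) = v x"
  using valuation_mult[OF assms(1), of "-1" x] valuation_minus_one[OF assms(1)] assms(2)
  by simp

lemma valuation_divide:
  assumes "valuation v" "x \<noteq> 0" "y \<noteq> 0"
  shows "v (x / y) = v x - v y"
proof -
  have "v (x / y) + v y = v x"
    using valuation_mult[OF assms(1), of "x / y" y] assms by simp
  then show ?thesis by (simp add: eq_diff_eq)
qed

lemma val_ring_uminus:
  assumes "valuation v" "x \<in> val_ring v"
  shows "- x \<in> val_ring v"
  using assms valuation_uminus[OF assms(1), of x] unfolding val_ring_def by (cases "x = 0") simp_all

lemma val_ring_add:
  assumes "valuation v" "x \<in> val_ring v" "y \<in> val_ring v"
  shows "x + y \<in> val_ring v"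
proof (cases "x = 0 \<or> y = 0 \<or> x + y = 0")
  case True
  then show ?thesis using assms(2,3) by (auto simp: val_ring_def)
next
  case False
  then have "min (v x) (v y) \<le> v (x + y)"
    using assms(1) unfolding valuation_def by blast
  moreover have "0 \<le> min (v x) (v y)"
    using assms(2,3) False unfolding val_ring_def by simp
  ultimately show ?thesis
    unfolding val_ring_def by (blast intro: order_trans)
qed

lemma val_ring_one: "valuation v \<Longrightarrow> 1 \<in> val_ring v"
  unfolding val_ring_def by (simp add: valuation_one)

lemma val_ring_diff:
  assumes "valuation v" "x \<in> val_ring v" "y \<in> val_ring v"
  shows "x - y \<in> val_ring v"
  using val_ring_add[OF assms(1,2) val_ring_uminus[OF assms(1,3)]] by simp

lemma val_ring_sum:
  assumes "valuation v" "\<And>i. i \<in> A \<Longrightarrow> f i \<in> val_ring v"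
  shows "sum f A \<in> val_ring v"
  using assms(2)
proof (induction A rule: infinite_finite_induct)
  case (insert i A)
  then show ?case by (simp add: val_ring_add[OF assms(1)])
qed (simp_all add: val_ring_def)

lemma divide_in_val_ring:
  assumes "valuation v" "y \<noteq> 0" "x \<noteq> 0 \<Longrightarrow> v y \<le> v x"
  shows "x / y \<in> val_ring v"
proof (cases "x = 0")
  case False
  then show ?thesis
    using assms valuation_divide[OF assms(1) False assms(2)] unfolding val_ring_def by simp
qed (simp add: val_ring_def)

lemma val_convex_sum:
  fixes I :: "'i set"
  assumes "val_convex v X" "finite I"
    and "\<And>i. i \<in> I \<Longrightarrow> x i \<in> X \<and> \<alpha> i \<in> val_ring v" "sum \<alpha> I = 1"
  shows "(\<Sum>i\<in>I. \<alpha> i *s x i) \<in> X"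
proof -
  obtain h where h: "bij_betw h {..<card I} I"
    using ex_bij_betw_nat_finite[OF assms(2)] atLeast0LessThan by auto
  have reindex: "sum f I = (\<Sum>j<card I. f (h j))" for f :: "'i \<Rightarrow> 'm::comm_monoid_add"
    using sum.reindex_bij_betw[OF h, of f] by simp
  have "\<forall>j<card I. x (h j) \<in> X \<and> \<alpha> (h j) \<in> val_ring v"
    using assms(3) bij_betwE[OF h] by simp
  moreover have "(\<Sum>j<card I. \<alpha> (h j)) = 1"
    using assms(4) reindex[of \<alpha>] by simp
  ultimately have "(\<Sum>j<card I. \<alpha> (h j) *s x (h j)) \<in> X"
    using assms(1)[unfolded val_convex_def, rule_format, of "card I" "x \<circ> h" "\<alpha> \<circ> h"] by simp
  then show ?thesis by (simp add: reindex)
qed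

text \<open>The point q carries the weight 1 - \<Sum> \<beta>_i, which lies in the valuation ring.\<close>

lemma val_convex_affine_combination:
  fixes I :: "'i set"
  assumes v: "valuation v" and X: "val_convex v X" "q \<in> X" and I: "finite I"
    and p: "\<And>i. i \<in> I \<Longrightarrow> p i \<in> X \<and> \<beta> i \<in> val_ring v"
  shows "q + (\<Sum>i\<in>I. \<beta> i *s (p i - q)) \<in> X"
proof -
  define J where "J = insert None (Some ` I)"
  define x where "x = case_option q p"
  define \<alpha> where "\<alpha> = case_option (1 - sum \<beta> I) \<beta>"
  have "(\<Sum>j\<in>J. \<alpha> j *s x j) \<in> X"
  proof (rule val_convex_sum[OF X(1)])
    show "finite J"
      using I by (simp add: J_def)
    have "1 - sum \<beta> I \<in> val_ring v"
      using p by (intro val_ring_diff[OF v val_ring_one[OF v] val_ring_sum[OF v]]) blast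
    then show "x j \<in> X \<and> \<alpha> j \<in> val_ring v" if "j \<in> J" for j
      using that p X(2) by (auto simp: J_def x_def \<alpha>_def)
    show "sum \<alpha> J = 1"
      using I by (simp add: J_def \<alpha>_def sum.reindex)
  qed
  also have "(\<Sum>j\<in>J. \<alpha> j *s x j) = (1 - sum \<beta> I) *s q + (\<Sum>i\<in>I. \<beta> i *s p i)"
    using I by (simp add: J_def x_def \<alpha>_def sum.reindex)
  also have "\<dots> = q + (\<Sum>i\<in>I. \<beta> i *s (p i - q))"
    by (simp add: vec.scale_right_diff_distrib sum_subtractf vec.scale_left_diff_distrib
        vec.scale_sum_left)
  finally show ?thesis .
qed

lemma exists_linear_relation_if_card_gt:
  fixes w :: "'i \<Rightarrow> 'a::field ^ 'n"
  assumes I: "finite I" "CARD('n) < card I"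
  shows "\<exists>c. (\<Sum>i\<in>I. c i *s w i) = 0 \<and> (\<exists>i\<in>I. c i \<noteq> 0)"
proof (cases "inj_on w I")
  case True
  have "vec.dim (w ` I) \<le> CARD('n)"
    using vec.dim_subset_UNIV[of "w ` I"] by (simp add: vec.dimension_def card_cart_basis)
  moreover have "card (w ` I) = card I"
    using True by (rule card_image)
  ultimately have "vec.dependent (w ` I)"
    using I(2) by (intro vec.dependent_biggerset_general) linarith
  then obtain u where "(\<Sum>x\<in>w ` I. u x *s x) = 0" "\<exists>x\<in>w ` I. u x \<noteq> 0"
    using vec.dependent_finite[of "w ` I"] I(1) by blast
  then show ?thesis
    using sum.reindex[OF True, of "\<lambda>x. u x *s x"] by (intro exI[of _ "u \<circ> w"]) auto
next
  case False
  then obtain i j where ij: "i \<in> I" "j \<in> I" "i \<noteq> j" "w i = w j"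
    unfolding inj_on_def by blast
  define c where "c l = (if l = i then 1 else if l = j then -1 else 0 :: 'a)" for l
  have "(\<Sum>l\<in>I. c l *s w l) = (\<Sum>l\<in>{i, j}. c l *s w l)"
    using ij I(1) by (intro sum.mono_neutral_right) (auto simp: c_def)
  also have "\<dots> = 0"
    using ij by (simp add: c_def)
  finally show ?thesis
    using ij(1) by (intro exI[of _ c]) (auto simp: c_def)
qed

text \<open>Dividing a nontrivial linear relation by a coefficient of minimal valuation.\<close>

lemma linear_relation_val_ring_coefficients:
  fixes w :: "'i \<Rightarrow> 'a::field ^ 'n"
  assumes v: "valuation v" and I: "finite I"
    and rel: "(\<Sum>i\<in>I. c i *s w i) = 0" and nontriv: "\<exists>i\<in>I. c i \<noteq> 0"
  shows "\<exists>j\<in>I. \<exists>\<beta>. (\<forall>i\<in>I. \<beta> i \<in> val_ring v) \<and> w j = (\<Sum>i\<in>I - {j}. \<beta> i *s w i)"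
proof -
  define A where "A = {i \<in> I. c i \<noteq> 0}"
  have A: "finite A" "A \<noteq> {}"
    using I nontriv unfolding A_def by auto
  obtain j where j: "j \<in> A" and jmin: "\<And>i. i \<in> A \<Longrightarrow> v (c j) \<le> v (c i)"
    using arg_min_if_finite[OF A, of "\<lambda>i. v (c i)"] by (meson not_le)
  then have jI: "j \<in> I" and cj: "c j \<noteq> 0"
    unfolding A_def by auto
  define \<beta> where "\<beta> i = - (c i / c j)" for i
  have "\<beta> i \<in> val_ring v" if "i \<in> I" for i
    using that jmin cj unfolding \<beta>_def A_def
    by (intro val_ring_uminus[OF v] divide_in_val_ring[OF v]) auto
  moreover have "w j = (\<Sum>i\<in>I - {j}. \<beta> i *s w i)"
  proof -
    have "c j *s w j + (\<Sum>i\<in>I - {j}. c i *s w i) = 0"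
      using rel jI I by (simp add: sum.remove)
    then have "c j *s w j = - (\<Sum>i\<in>I - {j}. c i *s w i)"
      by (simp add: add_eq_0_iff)
    then have "inverse (c j) *s (c j *s w j) = (\<Sum>i\<in>I - {j}. - inverse (c j) *s (c i *s w i))"
      by (simp add: vec.scale_sum_right sum_negf)
    then show ?thesis
      using cj by (simp add: \<beta>_def divide_inverse algebra_simps)
  qed
  ultimately show ?thesis
    using jI by blast
qed

lemma dual_shatters_witnesses:
  assumes "dual_shatters X F k"
  shows "\<exists>S q p. (\<forall>i<k. S i \<in> F \<and> q \<in> S i \<and> p i \<notin> S i) \<and>
           (\<forall>i<k. \<forall>j<k. j \<noteq> i \<longrightarrow> p i \<in> S j)"
proof -
  obtain S where SF: "\<And>i. i < k \<Longrightarrow> S i \<in> F"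
    and atoms: "\<And>I. I \<subseteq> {..<k} \<Longrightarrow> X \<inter> (\<Inter>i\<in>I. S i) \<inter> (\<Inter>i\<in>{..<k} - I. X - S i) \<noteq> {}"
    using assms unfolding dual_shatters_def by blast
  obtain q where q: "\<And>i. i < k \<Longrightarrow> q \<in> S i"
    using atoms[of "{..<k}"] by blast
  have "\<exists>p. p \<notin> S i \<and> (\<forall>j<k. j \<noteq> i \<longrightarrow> p \<in> S j)" if "i < k" for i
  proof -
    have "{..<k} - ({..<k} - {i}) = {i}"
      using that by auto
    then show ?thesis
      using atoms[of "{..<k} - {i}"] by auto
  qed
  then obtain p where "\<And>i. i < k \<Longrightarrow> p i \<notin> S i \<and> (\<forall>j<k. j \<noteq> i \<longrightarrow> p i \<in> S j)"
    by metis
  then show ?thesis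
    using SF q by blast
qed

lemma not_dual_shatters_Conv:
  fixes v :: "'a::field \<Rightarrow> 'g::linordered_ab_group_add"
  assumes v: "valuation v" and k: "CARD('n) < k"
  shows "\<not> dual_shatters (UNIV :: ('a ^ 'n) set) (Conv v) k"
proof
  assume shatters: "dual_shatters (UNIV :: ('a ^ 'n) set) (Conv v) k"
  obtain S :: "nat \<Rightarrow> ('a ^ 'n) set" and q p
    where S: "\<forall>i<k. S i \<in> Conv v \<and> q \<in> S i \<and> p i \<notin> S i"
    and p_other: "\<forall>i<k. \<forall>j<k. j \<noteq> i \<longrightarrow> p i \<in> S j"
    using dual_shatters_witnesses[OF shatters] by blast
  obtain c where rel: "(\<Sum>i<k. c i *s (p i - q)) = 0" and nontriv: "\<exists>i\<in>{..<k}. c i \<noteq> 0"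
    using exists_linear_relation_if_card_gt[of "{..<k}" "\<lambda>i. p i - q"] k by auto
  obtain j \<beta> where j: "j < k" and \<beta>: "\<forall>i\<in>{..<k}. \<beta> i \<in> val_ring v"
    and comb: "p j - q = (\<Sum>i\<in>{..<k} - {j}. \<beta> i *s (p i - q))"
    using linear_relation_val_ring_coefficients[OF v finite_lessThan rel nontriv] by blast
  have "q + (\<Sum>i\<in>{..<k} - {j}. \<beta> i *s (p i - q)) \<in> S j"
    using S p_other \<beta> j by (intro val_convex_affine_combination[OF v]) (auto simp: Conv_def)
  then have "p j \<in> S j"
    unfolding comb[symmetric] by simp
  with S j show False by blast
qed

lemma val_convex_coordinate_hyperplane: "val_convex v {x :: 'a::field ^ 'n. x $ j = 0}"
  unfolding val_convex_def by (auto simp: sum_component)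

lemma dual_shatters_Conv:
  fixes v :: "'a::field \<Rightarrow> 'g::linordered_ab_group_add"
  shows "dual_shatters (UNIV :: ('a ^ 'n) set) (Conv v) CARD('n)"
proof -
  obtain h :: "nat \<Rightarrow> 'n" where h: "bij_betw h {..<CARD('n)} UNIV"
    using ex_bij_betw_nat_finite[of "UNIV :: 'n set"] atLeast0LessThan by auto
  define S where "S i = {x :: 'a ^ 'n. x $ h i = 0}" for i
  have "S i \<in> Conv v" for i
    unfolding S_def Conv_def using val_convex_coordinate_hyperplane by blast
  moreover have "UNIV \<inter> (\<Inter>i\<in>I. S i) \<inter> (\<Inter>i\<in>{..<CARD('n)} - I. UNIV - S i) \<noteq> {}"
    if I: "I \<subseteq> {..<CARD('n)}" for I
  proof -
    define z :: "'a ^ 'n" where "z = (\<chi> j. if inv_into {..<CARD('n)} h j \<in> I then 0 else 1)"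
    have "z $ h i = (if i \<in> I then 0 else 1)" if "i < CARD('n)" for i
      using bij_betw_inv_into_left[OF h, of i] that by (simp add: z_def)
    then have "z \<in> UNIV \<inter> (\<Inter>i\<in>I. S i) \<inter> (\<Inter>i\<in>{..<CARD('n)} - I. UNIV - S i)"
      using I by (auto simp: S_def)
    then show ?thesis by blast
  qed
  ultimately show ?thesis
    unfolding dual_shatters_def by blast
qed

lemma dual_vc_dim_eqI:
  assumes "dual_shatters X F d" "\<And>k. dual_shatters X F k \<Longrightarrow> k \<le> d"
  shows "dual_vc_dim X F = enat d"
proof -
  have "(GREATEST k. dual_shatters X F k) = d"
    using assms by (intro Greatest_equality) auto
  then show ?thesis
    using assms(2) unfolding dual_vc_dim_def by auto
qed

theorem theorem4p10:
  fixes v :: "'a::field \<Rightarrow> 'g::linordered_ab_group_add"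
  assumes "valuation v"
  shows "dual_vc_dim (UNIV :: ('a ^ 'n) set) (Conv v) = enat CARD('n)
       \<and> dual_shatters (UNIV :: ('a ^ 'n) set) (Conv v) CARD('n)
       \<and> \<not> dual_shatters (UNIV :: ('a ^ 'n) set) (Conv v) (CARD('n) + 1)"
proof -
  have shatters: "dual_shatters (UNIV :: ('a ^ 'n) set) (Conv v) CARD('n)"
    by (rule dual_shatters_Conv)
  have upper: "k \<le> CARD('n)" if "dual_shatters (UNIV :: ('a ^ 'n) set) (Conv v) k" for k
    using not_dual_shatters_Conv[OF assms] that by (meson not_le)
  have "\<not> dual_shatters (UNIV :: ('a ^ 'n) set) (Conv v) (CARD('n) + 1)"
    using upper by fastforce
  then show ?thesis
    using dual_vc_dim_eqI[OF shatters upper] shatters by blast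
qed

end
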